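(* Let $d,n$ be positive integers with $d\leq n^2/4$. Then $$p_d(n)<4e^{cn}n^{n+2\sqrt{d}}\max\{2^{-n},(2n)^{-\sqrt{d}}\}\qquad\text{with } c=\frac{3}{2e}+1.$$ Consequently, if $d=d(n)$ satisfies $dn^{-2}\to 0$ as $n\to\infty$, then $p_d(n)\leq n^{n+o(n)}$.
   Context: $\mathbb{Z}_+=\{0,1,2,\dots\}$. A set $S\subset\mathbb{Z}_+^d$ is a lower set if whenever $\mathbf{x}\in S$ and $\mathbf{x}'\in\mathbb{Z}_+^d$ satisfies $x'_i\leq x_i$ for all $i$, then $\mathbf{x}'\in S$. $p_d(n)$ denotes the number of lower sets in $\mathbb{Z}_+^d$ with exactly $n$ points. *)

theory Defs
  imports "HOL-Analysis.Analysis"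
begin

text \<open>Points of Z_+^d are represented as lists of naturals of length d.\<close>

definition lower_set :: "nat \<Rightarrow> nat list set \<Rightarrow> bool" where
  "lower_set d S \<longleftrightarrow> S \<subseteq> {x. length x = d} \<and>
     (\<forall>x\<in>S. \<forall>x'. length x' = d \<and> (\<forall>i<d. x' ! i \<le> x ! i) \<longrightarrow> x' \<in> S)"

definition p :: "nat \<Rightarrow> nat \<Rightarrow> nat" where
  "p d n = card {S. lower_set d S \<and> finite S \<and> card S = n}"

end

theory Submission
  imports Defs "HOL-Library.List_Lexorder" "HOL-Real_Asymp.Real_Asymp"
begin

text \<open>
Order Z_+^d lexicographically, so that pointwise smaller points come first. Every point x of a
lower set S other than the origin has the parent x - e_i, where i is the first nonzero coordinate
of x, and both x - e_i and e_i lie in S before x. Code x by (0, i) if x = e_i, and otherwise by the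
ranks of x - e_i and of e_i in S, both in [1, n - 1] where n = |S|. Running through S in increasing
order, every point is recovered from its code and the earlier points, so the n - 1 codes determine S.
Hence, with N = n - 1, p_d(n) <= binom(d + N^2, N) <= N^N (N + d/N)^N / N! <= n^N e^(N + d/N),
which is at most e^(3n/2) n^n when d <= n^2/4; this is stronger than both claims.
\<close>

lemma list_all2_le_imp_less:
  fixes xs ys :: "'a::order list"
  assumes "list_all2 (\<le>) xs ys" "xs \<noteq> ys"
  shows "xs < ys"
  using assms
proof (induction xs arbitrary: ys)
  case Nil
  then show ?case by simp
next
  case (Cons a xs)
  then obtain b ys' where ys: "ys = b # ys'" "a \<le> b" "list_all2 (\<le>) xs ys'"
    by (auto simp: list_all2_Cons1)
  show ?case
  proof (cases "a = b")
    case True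
    then show ?thesis using Cons ys by simp
  next
    case False
    then show ?thesis using ys by simp
  qed
qed

lemma lower_set_length: "lower_set d S \<Longrightarrow> x \<in> S \<Longrightarrow> length x = d"
  unfolding lower_set_def by blast

lemma lower_setD: "lower_set d S \<Longrightarrow> x \<in> S \<Longrightarrow> list_all2 (\<le>) y x \<Longrightarrow> y \<in> S"
  unfolding lower_set_def by (auto simp: list_all2_conv_all_nth)

lemma lower_set_origin_mem: "lower_set d S \<Longrightarrow> x \<in> S \<Longrightarrow> replicate d 0 \<in> S"
  by (rule lower_setD) (auto simp: list_all2_conv_all_nth lower_set_length)

lemma origin_less: "(x :: nat list) \<noteq> replicate (length x) 0 \<Longrightarrow> replicate (length x) 0 < x"
  by (rule list_all2_le_imp_less) (auto simp: list_all2_conv_all_nth)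

definition unit_vec :: "nat \<Rightarrow> nat \<Rightarrow> nat list" where
  "unit_vec d i = (replicate d 0)[i := 1]"

definition lead_index :: "nat list \<Rightarrow> nat" where
  "lead_index x = (LEAST i. 0 < x ! i)"

definition parent :: "nat list \<Rightarrow> nat list" where
  "parent x = x[lead_index x := x ! lead_index x - 1]"

lemma lead_index:
  assumes "x \<noteq> replicate (length x) 0"
  shows "lead_index x < length x" "0 < x ! lead_index x"
proof -
  have "\<exists>i<length x. 0 < x ! i"
  proof (rule ccontr)
    assume "\<not> (\<exists>i<length x. 0 < x ! i)"
    then have "x = replicate (length x) 0"
      by (intro nth_equalityI) auto
    with assms show False ..
  qed
  then obtain i where i: "i < length x" "0 < x ! i" by blast
  show "0 < x ! lead_index x"
    unfolding lead_index_def by (rule LeastI[of _ i]) (rule i(2))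
  have "lead_index x \<le> i"
    unfolding lead_index_def by (rule Least_le) (rule i(2))
  with i show "lead_index x < length x" by simp
qed

lemma length_parent [simp]: "length (parent x) = length x"
  by (simp add: parent_def)

lemma list_all2_parent_le: "list_all2 (\<le>) (parent x) x"
  by (cases "lead_index x < length x") (auto simp: parent_def list_all2_conv_all_nth nth_list_update)

lemma parent_less:
  assumes "x \<noteq> replicate (length x) 0"
  shows "parent x < x"
proof (rule list_all2_le_imp_less[OF list_all2_parent_le])
  show "parent x \<noteq> x"
  proof
    assume "parent x = x"
    then have "parent x ! lead_index x = x ! lead_index x" by simp
    then show False using lead_index[OF assms] by (simp add: parent_def)
  qed
qed

lemma parent_update_lead_index:
  assumes "x \<noteq> replicate (length x) 0"
  shows "(parent x)[lead_index x := parent x ! lead_index x + 1] = x"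
  using lead_index[OF assms] by (simp add: parent_def)

lemma length_unit_vec [simp]: "length (unit_vec d i) = d"
  by (simp add: unit_vec_def)

lemma unit_vec_nth: "j < d \<Longrightarrow> unit_vec d i ! j = (if j = i then 1 else 0)"
  by (simp add: unit_vec_def nth_list_update)

lemma unit_vec_neq_origin:
  assumes "i < d"
  shows "unit_vec d i \<noteq> replicate d 0"
proof
  assume "unit_vec d i = replicate d 0"
  then have "unit_vec d i ! i = replicate d 0 ! i" by simp
  with assms show False by (simp add: unit_vec_nth)
qed

lemma unit_vec_inj:
  assumes "i < d" "i' < d" "unit_vec d i = unit_vec d i'"
  shows "i = i'"
proof -
  have "unit_vec d i ! i = unit_vec d i' ! i" using assms(3) by simp
  with assms(1,2) show ?thesis by (simp add: unit_vec_nth split: if_splits)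
qed

lemma list_all2_unit_vec_le:
  "i < length x \<Longrightarrow> 0 < x ! i \<Longrightarrow> list_all2 (\<le>) (unit_vec (length x) i) x"
  by (auto simp: list_all2_conv_all_nth unit_vec_nth)

lemma unit_vec_lead_index_less:
  assumes "x \<noteq> replicate (length x) 0" "parent x \<noteq> replicate (length x) 0"
  shows "unit_vec (length x) (lead_index x) < x"
proof (rule list_all2_le_imp_less[OF list_all2_unit_vec_le[OF lead_index[OF assms(1)]]])
  define d i where "d = length x" and "i = lead_index x"
  have "i < d" using lead_index(1)[OF assms(1)] by (simp add: d_def i_def)
  show "unit_vec (length x) (lead_index x) \<noteq> x"
  proof
    assume x: "unit_vec (length x) (lead_index x) = x"
    have "parent x = (unit_vec d i)[i := unit_vec d i ! i - 1]"
      unfolding d_def i_def x by (simp add: parent_def)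
    also have "\<dots> = replicate d 0"
      using \<open>i < d\<close> by (simp add: unit_vec_def list_update_same_conv)
    finally show False using assms(2) by (simp add: d_def)
  qed
qed

definition order_rank :: "'a::ord set \<Rightarrow> 'a \<Rightarrow> nat" where
  "order_rank S x = card {y \<in> S. y < x}"

lemma order_rank_strict_mono:
  fixes x y :: "'a::preorder"
  assumes "finite S" "y \<in> S" "y < x"
  shows "order_rank S y < order_rank S x"
  unfolding order_rank_def using assms by (intro psubset_card_mono) (auto dest: less_trans)

lemma order_rank_inj:
  fixes x y :: "'a::linorder"
  assumes "finite S" "x \<in> S" "y \<in> S" "order_rank S x = order_rank S y"
  shows "x = y"
  using order_rank_strict_mono[OF assms(1,2), of y] order_rank_strict_mono[OF assms(1,3), of x] assms(4)
  by (cases x y rule: linorder_cases) simp_all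

lemma order_rank_less_card:
  "finite S \<Longrightarrow> (x :: 'a::preorder) \<in> S \<Longrightarrow> order_rank S x < card S"
  unfolding order_rank_def by (intro psubset_card_mono) auto

lemma order_rank_cong:
  fixes x v :: "'a::preorder"
  assumes "\<forall>w<x. w \<in> S \<longleftrightarrow> w \<in> S'" "v < x"
  shows "order_rank S v = order_rank S' v"
proof -
  have "{y \<in> S. y < v} = {y \<in> S'. y < v}" using assms by (auto dest: less_trans)
  then show ?thesis by (simp add: order_rank_def)
qed

lemma order_rank_eq_below:
  fixes x v v' :: "'a::linorder"
  assumes "finite S'" "\<forall>w<x. w \<in> S \<longleftrightarrow> w \<in> S'" "v \<in> S" "v < x" "v' \<in> S'"
    and "order_rank S' v' = order_rank S v"
  shows "v' = v"
proof (rule order_rank_inj[OF assms(1,5)])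
  show "v \<in> S'"
    using assms(2-4) by blast
  show "order_rank S' v' = order_rank S' v"
    using assms(6) order_rank_cong[OF assms(2,4)] by simp
qed

definition point_code :: "nat list set \<Rightarrow> nat list \<Rightarrow> nat \<times> nat" where
  "point_code S x =
     (if parent x = replicate (length x) 0 then (0, lead_index x)
      else (order_rank S (parent x), order_rank S (unit_vec (length x) (lead_index x))))"

lemma lower_set_parent_mem:
  "lower_set d S \<Longrightarrow> x \<in> S \<Longrightarrow> parent x \<in> S"
  using lower_setD list_all2_parent_le by blast

lemma lower_set_unit_vec_mem:
  assumes "lower_set d S" "x \<in> S" "x \<noteq> replicate d 0"
  shows "unit_vec d (lead_index x) \<in> S"
proof -
  have "length x = d"
    using assms(1,2) by (rule lower_set_length)
  then have "list_all2 (\<le>) (unit_vec d (lead_index x)) x"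
    using list_all2_unit_vec_le[OF lead_index[of x]] assms(3) by simp
  then show ?thesis
    using lower_setD[OF assms(1,2)] by blast
qed

lemma order_rank_pos:
  assumes "lower_set d S" "finite S" "x \<in> S" "x \<noteq> replicate d 0"
  shows "0 < order_rank S x"
  using order_rank_strict_mono[OF assms(2) lower_set_origin_mem[OF assms(1,3)]]
    origin_less assms lower_set_length by fastforce

lemma point_code_parent_origin:
  assumes "lower_set d S" "finite S" "x \<in> S"
  shows "fst (point_code S x) = 0 \<longleftrightarrow> parent x = replicate d 0"
  using order_rank_pos[OF assms(1,2) lower_set_parent_mem[OF assms(1,3)]] assms
  by (auto simp: point_code_def lower_set_length)

lemma point_code_decode:
  assumes L: "lower_set d S" "lower_set d S'" "finite S" "finite S'"
    and x: "x \<in> S" "x \<noteq> replicate d 0" and x': "x' \<in> S'" "x' \<noteq> replicate d 0"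
    and agree: "\<forall>w<x. w \<in> S \<longleftrightarrow> w \<in> S'"
    and code: "point_code S' x' = point_code S x"
  shows "x' = x"
proof -
  have len: "length x = d" "length x' = d"
    using L x x' lower_set_length by blast+
  have parent_origin: "parent x' = replicate d 0 \<longleftrightarrow> parent x = replicate d 0"
    using point_code_parent_origin[OF L(1,3) x(1)] point_code_parent_origin[OF L(2,4) x'(1)] code
    by simp
  have "parent x' = parent x \<and> lead_index x' = lead_index x"
  proof (cases "parent x = replicate d 0")
    case True
    with parent_origin show ?thesis using code by (simp add: point_code_def len)
  next
    case False
    with parent_origin have ranks:
      "order_rank S' (parent x') = order_rank S (parent x)"
      "order_rank S' (unit_vec d (lead_index x')) = order_rank S (unit_vec d (lead_index x))"
      using code by (simp_all add: point_code_def len)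
    have below: "parent x < x" "unit_vec d (lead_index x) < x"
      using parent_less[of x] unit_vec_lead_index_less[of x] x(2) False len by simp_all
    have "parent x' = parent x"
      by (rule order_rank_eq_below[OF L(4) agree lower_set_parent_mem[OF L(1) x(1)] below(1)
            lower_set_parent_mem[OF L(2) x'(1)] ranks(1)])
    moreover have "unit_vec d (lead_index x') = unit_vec d (lead_index x)"
      by (rule order_rank_eq_below[OF L(4) agree lower_set_unit_vec_mem[OF L(1) x] below(2)
            lower_set_unit_vec_mem[OF L(2) x'] ranks(2)])
    then have "lead_index x' = lead_index x"
      using unit_vec_inj lead_index(1)[of x] lead_index(1)[of x'] x(2) x'(2) len by simp
    ultimately show ?thesis ..
  qed
  then have "x' = (parent x)[lead_index x := parent x ! lead_index x + 1]"
    using parent_update_lead_index[of x'] x'(2) len by simp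
  also have "\<dots> = x"
    using parent_update_lead_index[of x] x(2) len by simp
  finally show ?thesis .
qed

definition lower_set_code :: "nat \<Rightarrow> nat list set \<Rightarrow> (nat \<times> nat) set" where
  "lower_set_code d S = point_code S ` (S - {replicate d 0})"

lemma card_lower_set_code:
  assumes "lower_set d S" "finite S" "S \<noteq> {}"
  shows "card (lower_set_code d S) = card S - 1"
proof -
  have "inj_on (point_code S) (S - {replicate d 0})"
    using point_code_decode[OF assms(1,1,2,2)] by (intro inj_onI) blast
  then have "card (lower_set_code d S) = card (S - {replicate d 0})"
    unfolding lower_set_code_def by (rule card_image)
  also have "\<dots> = card S - 1"
    using assms lower_set_origin_mem by (auto simp: card_Diff_singleton)
  finally show ?thesis .
qed

lemma lower_set_code_subset:
  assumes "lower_set d S" "finite S"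
  shows "lower_set_code d S \<subseteq> {0} \<times> {..<d} \<union> {1..<card S} \<times> {1..<card S}"
proof
  fix c assume "c \<in> lower_set_code d S"
  then obtain x where x: "x \<in> S" "x \<noteq> replicate d 0" and c: "c = point_code S x"
    unfolding lower_set_code_def by blast
  have len: "length x = d" using lower_set_length assms x by blast
  show "c \<in> {0} \<times> {..<d} \<union> {1..<card S} \<times> {1..<card S}"
  proof (cases "parent x = replicate d 0")
    case True
    then show ?thesis using c len lead_index(1)[of x] x(2) by (simp add: point_code_def)
  next
    case False
    have "parent x \<in> S" "unit_vec d (lead_index x) \<in> S"
      using lower_set_parent_mem lower_set_unit_vec_mem assms x by blast+
    moreover have "unit_vec d (lead_index x) \<noteq> replicate d 0"
      using unit_vec_neq_origin lead_index(1)[of x] x(2) len by simp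
    ultimately have "order_rank S (parent x) \<in> {1..<card S}"
      "order_rank S (unit_vec d (lead_index x)) \<in> {1..<card S}"
      using order_rank_pos[OF assms] order_rank_less_card[OF assms(2)] False
      by (auto simp: Suc_le_eq)
    then show ?thesis using c len False by (simp add: point_code_def)
  qed
qed

lemma lower_set_code_mem_transfer:
  assumes L: "lower_set d S" "lower_set d S'" "finite S" "finite S'"
    and code: "lower_set_code d S = lower_set_code d S'"
    and m: "m \<in> S" "m \<noteq> replicate d 0"
    and agree: "\<forall>w<m. w \<in> S \<longleftrightarrow> w \<in> S'"
  shows "m \<in> S'"
proof -
  have "point_code S m \<in> lower_set_code d S'"
    using code m unfolding lower_set_code_def by blast
  then obtain x' where x': "x' \<in> S'" "x' \<noteq> replicate d 0"
    and "point_code S' x' = point_code S m"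
    unfolding lower_set_code_def by force
  then have "x' = m"
    using point_code_decode[OF L m x' agree] by simp
  with x' show ?thesis by simp
qed

lemma lower_set_code_inj:
  assumes L: "lower_set d S" "lower_set d S'" "finite S" "finite S'" "S \<noteq> {}" "S' \<noteq> {}"
    and code: "lower_set_code d S = lower_set_code d S'"
  shows "S = S'"
proof (rule ccontr)
  assume "S \<noteq> S'"
  define D where "D = (S - S') \<union> (S' - S)"
  have "finite D" "D \<noteq> {}"
    using L \<open>S \<noteq> S'\<close> unfolding D_def by auto
  define m where "m = Min D"
  have "m \<in> D"
    unfolding m_def using Min_in[OF \<open>finite D\<close> \<open>D \<noteq> {}\<close>] .
  have agree: "\<forall>w<m. w \<in> S \<longleftrightarrow> w \<in> S'"
  proof (intro allI impI)
    fix w assume "w < m"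
    then have "w \<notin> D"
      using Min_le[OF \<open>finite D\<close>, of w] by (auto simp: m_def)
    then show "w \<in> S \<longleftrightarrow> w \<in> S'"
      unfolding D_def by blast
  qed
  have "m \<noteq> replicate d 0"
    using \<open>m \<in> D\<close> L lower_set_origin_mem unfolding D_def by blast
  then show False
    using \<open>m \<in> D\<close> agree lower_set_code_mem_transfer[OF L(1-4) code]
      lower_set_code_mem_transfer[OF L(2,1,4,3) code[symmetric]]
    unfolding D_def by blast
qed

lemma p_le_binomial:
  assumes "0 < n"
  shows "p d n \<le> (d + (n - 1)\<^sup>2) choose (n - 1)"
proof -
  define F where "F = {S. lower_set d S \<and> finite S \<and> card S = n}"
  define U where "U = {0::nat} \<times> {..<d} \<union> {1..<n} \<times> {1..<n}"
  have "finite U" by (simp add: U_def)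
  have "card U = d + (n - 1)\<^sup>2"
    unfolding U_def by (subst card_Un_disjoint) (auto simp: card_cartesian_product power2_eq_square)
  have "card F \<le> card {P. P \<subseteq> U \<and> card P = n - 1}"
  proof (rule card_inj_on_le)
    show "inj_on (lower_set_code d) F"
      using lower_set_code_inj assms unfolding F_def by (intro inj_onI) force
    show "lower_set_code d ` F \<subseteq> {P. P \<subseteq> U \<and> card P = n - 1}"
      using lower_set_code_subset card_lower_set_code assms unfolding F_def U_def by force
    show "finite {P. P \<subseteq> U \<and> card P = n - 1}"
      using \<open>finite U\<close> by simp
  qed
  also have "\<dots> = card U choose (n - 1)"
    using n_subsets[OF \<open>finite U\<close>] .
  finally show ?thesis
    unfolding p_def F_def \<open>card U = d + (n - 1)\<^sup>2\<close> .
qed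

lemma power_div_fact_le_exp:
  fixes x :: real
  assumes "0 \<le> x"
  shows "x ^ k / fact k \<le> exp x"
proof -
  have exp: "(\<lambda>n. x ^ n /\<^sub>R fact n) sums exp x"
    by (rule exp_converges)
  have "(\<Sum>n\<in>{k}. x ^ n /\<^sub>R fact n) \<le> (\<Sum>n. x ^ n /\<^sub>R fact n)"
    using assms by (intro sum_le_suminf[OF sums_summable[OF exp]]) auto
  then show ?thesis
    using sums_unique[OF exp] by (simp add: divide_inverse mult.commute)
qed

lemma binomial_le_power_div_fact: "real (m choose k) \<le> real m ^ k / fact k"
proof -
  have "real ((m choose k) * fact k) \<le> real (m ^ k)"
    by (simp only: of_nat_le_iff binomial_fact_pow)
  then show ?thesis by (simp add: field_simps)
qed

lemma p_le_exp_mult_power: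
  assumes "2 \<le> n" "real d \<le> real n ^ 2 / 4"
  shows "real (p d n) \<le> exp (3 / 2 * real n) * real n ^ n"
proof -
  define N where "N = n - 1"
  have "1 \<le> N" "real n = real N + 1"
    using assms(1) by (auto simp: N_def)
  have "real d / real N \<le> real n / 2"
  proof -
    have "real n ^ 2 / 4 \<le> real n / 2 * real N"
      using \<open>1 \<le> N\<close> \<open>real n = real N + 1\<close> mult_mono[of 1 "real N" 1 "real N"]
      by (simp add: power2_eq_square field_simps)
    with assms(2) \<open>1 \<le> N\<close> show ?thesis by (simp add: field_simps)
  qed
  have "real (p d n) \<le> real ((d + N\<^sup>2) choose N)"
    using p_le_binomial[of n d] assms(1) by (simp add: N_def)
  also have "\<dots> \<le> real (d + N\<^sup>2) ^ N / fact N"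
    by (rule binomial_le_power_div_fact)
  also have "\<dots> = real N ^ N * ((real N + real d / real N) ^ N / fact N)"
    using \<open>1 \<le> N\<close> by (simp add: field_simps power2_eq_square flip: power_mult_distrib)
  also have "\<dots> \<le> real n ^ N * exp (real N + real d / real N)"
    using \<open>real n = real N + 1\<close>
    by (intro mult_mono power_mono power_div_fact_le_exp) auto
  also have "\<dots> \<le> real n ^ n * exp (3 / 2 * real n)"
    using assms(1) \<open>real n = real N + 1\<close> \<open>real d / real N \<le> real n / 2\<close>
    by (intro mult_mono power_increasing) (auto simp: N_def)
  finally show ?thesis by (simp add: mult.commute)
qed

lemma power_le_powr_mult_powr:
  fixes x s :: real
  assumes "2 \<le> x" "0 \<le> s"
  shows "x ^ n \<le> x powr (real n + 2 * s) * (2 * x) powr (- s)"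
proof -
  have "x powr (real n + 2 * s) = x ^ n * x powr s * x powr s"
    using assms(1) by (simp only: mult_2 powr_add mult.assoc powr_realpow)
  moreover have "(2 * x) powr (- s) = 1 / (2 powr s * x powr s)"
    using assms(1) by (simp add: powr_minus powr_mult divide_inverse)
  ultimately have "x powr (real n + 2 * s) * (2 * x) powr (- s) = x ^ n * (x powr s / 2 powr s)"
    using assms(1) by simp
  also have "\<dots> = x ^ n * (x / 2) powr s"
    using assms(1) by (simp add: powr_divide)
  finally have "x powr (real n + 2 * s) * (2 * x) powr (- s) = x ^ n * (x / 2) powr s" .
  moreover have "1 \<le> (x / 2) powr s"
    using assms by (intro ge_one_powr_ge_zero) auto
  ultimately show ?thesis
    using assms(1) by simp
qed

lemma three_halves_le_exponent_constant: "3 / 2 \<le> 3 / (2 * exp 1) + (1 :: real)"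
  using exp_le by (simp add: field_simps)

lemma p_less_explicit_bound:
  assumes "0 < d" "0 < n" "real d \<le> real n ^ 2 / 4"
  shows "real (p d n) < 4 * exp ((3 / (2 * exp 1) + 1) * real n)
           * real n powr (real n + 2 * sqrt (real d))
           * max (2 powr (- real n)) ((2 * real n) powr (- sqrt (real d)))"
proof -
  have "2 \<le> n"
    using assms by (cases "n = 1") auto
  define c where "c = 3 / (2 * exp 1) + (1 :: real)"
  have "3 / 2 * real n \<le> c * real n"
    unfolding c_def using three_halves_le_exponent_constant by (rule mult_right_mono) simp
  have "real (p d n) \<le> exp (3 / 2 * real n) * real n ^ n"
    using p_le_exp_mult_power \<open>2 \<le> n\<close> assms(3) by blast
  also have "\<dots> \<le> exp (c * real n) * real n ^ n"
    using \<open>3 / 2 * real n \<le> c * real n\<close> by (intro mult_right_mono) auto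
  also have "\<dots> < 4 * exp (c * real n) * real n ^ n"
    using \<open>2 \<le> n\<close> by simp
  also have "\<dots> \<le> 4 * exp (c * real n) * (real n powr (real n + 2 * sqrt (real d))
                   * (2 * real n) powr (- sqrt (real d)))"
    using \<open>2 \<le> n\<close> by (intro mult_left_mono power_le_powr_mult_powr) auto
  also have "\<dots> \<le> 4 * exp (c * real n) * (real n powr (real n + 2 * sqrt (real d))
                   * max (2 powr (- real n)) ((2 * real n) powr (- sqrt (real d))))"
    by (intro mult_left_mono) auto
  finally show ?thesis
    by (simp add: c_def mult.assoc)
qed

lemma p_le_powr_add_little_o:
  fixes dd :: "nat \<Rightarrow> nat"
  assumes "(\<lambda>n. real (dd n) / real n ^ 2) \<longlonglongrightarrow> 0"
  shows "\<exists>g :: nat \<Rightarrow> real. ((\<lambda>n. g n / real n) \<longlonglongrightarrow> 0) \<and>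
           (\<forall>\<^sub>F n in sequentially. real (p (dd n) n) \<le> real n powr (real n + g n))"
proof (intro exI conjI)
  define g where "g n = 3 / 2 * real n / ln (real n)" for n :: nat
  show "(\<lambda>n. g n / real n) \<longlonglongrightarrow> 0"
    unfolding g_def by real_asymp
  have "\<forall>\<^sub>F n in sequentially. real (dd n) / real n ^ 2 < 1 / 4"
    by (rule order_tendstoD(2)[OF assms]) simp
  then show "\<forall>\<^sub>F n in sequentially. real (p (dd n) n) \<le> real n powr (real n + g n)"
    using eventually_ge_at_top[of 2]
  proof eventually_elim
    case (elim n)
    then have "real (dd n) \<le> real n ^ 2 / 4"
      by (simp add: field_simps)
    with elim have "real (p (dd n) n) \<le> exp (3 / 2 * real n) * real n ^ n"
      using p_le_exp_mult_power by blast
    also have "\<dots> = real n powr (real n + g n)"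
    proof -
      have "0 < ln (real n)"
        using elim(2) by simp
      then have "real n powr g n = exp (3 / 2 * real n)"
        using elim(2) by (simp add: powr_def g_def)
      moreover have "real n powr real n = real n ^ n"
        using elim(2) by (simp add: powr_realpow)
      ultimately show ?thesis
        by (simp add: powr_add)
    qed
    finally show ?case .
  qed
qed

theorem proposition2:
  shows "(\<forall>d n. 0 < d \<longrightarrow> 0 < n \<longrightarrow> real d \<le> real n ^ 2 / 4 \<longrightarrow>
            real (p d n) < 4 * exp ((3 / (2 * exp 1) + 1) * real n)
              * real n powr (real n + 2 * sqrt (real d))
              * max (2 powr (- real n)) ((2 * real n) powr (- sqrt (real d))))
       \<and> (\<forall>dd :: nat \<Rightarrow> nat. (\<forall>n. 0 < dd n) \<longrightarrow>
            ((\<lambda>n. real (dd n) / real n ^ 2) \<longlonglongrightarrow> 0) \<longrightarrow>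
            (\<exists>g :: nat \<Rightarrow> real. ((\<lambda>n. g n / real n) \<longlonglongrightarrow> 0) \<and>
               (\<forall>\<^sub>F n in sequentially. real (p (dd n) n) \<le> real n powr (real n + g n))))"
  using p_less_explicit_bound p_le_powr_add_little_o by blast

end
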